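(* Let $r$ be a rational number with $0<r<1$ and $r\neq 1/p$ for every integer $p\ge2$, written as $r=[m_1,\dots,m_k]$ with $k\ge2$, $m_i\in\mathbb{Z}_{>0}$, $m_k\ge2$, and let $n\ge2$ be an integer. Let $(S_1,S_2,S_1,S_2)$ be the decomposition of $CS(r)$ described in the context. Then for every rational number $s\in I_1(r;n)\cup I_2(r;n)$: (1) if $k$ is even, $CS(s)$ does not contain $((2n-2)\langle S_1,S_2\rangle,S_1)$ as a subsequence; (2) if $k$ is odd, $CS(s)$ does not contain $((2n-2)\langle S_2,S_1\rangle,S_2)$ as a subsequence.
   Context: Continued fractions: $[m_1,\dots,m_k]=1/(m_1+1/(m_2+\cdots+1/m_k))$. Set $m=m_1$. Intervals: if $k$ is even, $I_1(r;n)=[0,[m_1,\dots,m_{k-1},m_k-1,2]]$ and $I_2(r;n)=([m_1,\dots,m_k,2n-2],1]$; if $k$ is odd, $I_1(r;n)=[0,[m_1,\dots,m_k,2n-2])$ and $I_2(r;n)=[[m_1,\dots,m_{k-1},m_k-1,2],1]$. For $s\in\mathbb{Q}\cup\{\infty\}$, $u_s$ is the cyclically reduced, cyclically alternating word in the free group $F(a,b)$ (letters $a^{\pm1}$, $b^{\pm1}$ alternate) representing the simple loop of slope $s$ on the 4-punctured 2-bridge sphere in the upper tangle complement (well defined up to cyclic permutation and inversion). For a cyclically reduced cyclic word $(w)$ in $\{a,b\}$, decompose it cyclically into maximal subwords that are alternately positive (all exponents $+1$) and negative (all exponents $-1$); $CS(w)$ is the cyclic sequence of their lengths (if $w$ is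 entirely positive or negative, $CS(w)=((|w|))$). $CS(s):=CS(u_s)$. $CS(r)$ consists of the integers $m$ and $m+1$ and has a decomposition $CS(r)=((S_1,S_2,S_1,S_2))$ in which each $S_i$ is a symmetric sequence (equal to its reverse) occurring only twice in $CS(r)$, $S_1$ begins and ends with $m+1$, and $S_2$ begins and ends with $m$; this is the decomposition meant. For a sequence $T$ and finite sequences $A,B$, $d\langle A,B\rangle$ denotes $(A,B,A,B,\dots,A,B)$ with $d$ copies of $(A,B)$. "Contains as a subsequence" means occurs as a block of consecutive terms of the cyclic sequence. *)

theory Defs
  imports Complex_Main
begin

fun cf :: "nat list \<Rightarrow> rat" where
  "cf [] = 0"
| "cf (m # ms) = 1 / (of_nat m + cf ms)"

text \<open>Letters of the free group F(a,b); a word is a list of (generator, exponent) with exponent \<plusminus>1.\<close>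
datatype gen = GA | GB

type_synonym word = "(gen \<times> int) list"

definition winv :: "word \<Rightarrow> word" where
  "winv w = rev (map (\<lambda>(x, e). (x, - e)) w)"

text \<open>The word u_s for s = q/p (p \<ge> 1, gcd(p,q)=1), following Lee--Sakuma:
  eps_i = (-1)^floor(i q / p); hat u = b^eps_1 a^eps_2 ... (alternating, length p-1);
  if p odd, u = a (hat u) b^((-1)^q) (hat u)^-1; if p even, u = a (hat u) a^-1 (hat u)^-1.\<close>
definition eps :: "int \<Rightarrow> int \<Rightarrow> nat \<Rightarrow> int" where
  "eps q p i = (if even ((int i * q) div p) then 1 else -1)"

definition hat_u :: "rat \<Rightarrow> word" where
  "hat_u s = (case quotient_of s of (q, p) \<Rightarrow>
     map (\<lambda>i. (if odd i then GB else GA, eps q p i)) [1..<nat p])"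

definition u_word :: "rat \<Rightarrow> word" where
  "u_word s = (case quotient_of s of (q, p) \<Rightarrow>
     (if odd p then [(GA, 1)] @ hat_u s @ [(GB, if even q then 1 else -1)] @ winv (hat_u s)
      else [(GA, 1)] @ hat_u s @ [(GA, -1)] @ winv (hat_u s)))"

function runs :: "int list \<Rightarrow> nat list" where
  "runs [] = []"
| "runs (x # xs) = Suc (length (takeWhile (\<lambda>y. y = x) xs)) # runs (dropWhile (\<lambda>y. y = x) xs)"
  by pat_completeness auto
termination
  by (relation "measure length") (auto simp: le_imp_less_Suc length_dropWhile_le)

text \<open>CS of a cyclic word (given by a representative list), as a representative list
  of the cyclic sequence: rotate to start at a sign change, then take block lengths.\<close>
definition CS_word :: "word \<Rightarrow> nat list" where
  "CS_word w = (let es = map snd w in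
     if (\<forall>e\<in>set es. e = hd es) then [length es]
     else runs (rotate (length (takeWhile (\<lambda>e. e = hd es) es)) es))"

definition CS :: "rat \<Rightarrow> nat list" where
  "CS s = CS_word (u_word s)"

definition cyc_contains :: "nat list \<Rightarrow> nat list \<Rightarrow> bool" where
  "cyc_contains L P \<longleftrightarrow> length P \<le> length L \<and> (\<exists>j<length L. take (length P) (rotate j L) = P)"

definition cyc_occ :: "nat list \<Rightarrow> nat list \<Rightarrow> nat" where
  "cyc_occ L S = card {j. j < length L \<and> length S \<le> length L \<and> take (length S) (rotate j L) = S}"

text \<open>d<A,B> = (A,B,...,A,B) with d copies of (A,B).\<close>
definition drep :: "nat \<Rightarrow> nat list \<Rightarrow> nat list \<Rightarrow> nat list" where
  "drep d A B = concat (replicate d (A @ B))"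

definition is_CS_decomp :: "nat \<Rightarrow> nat list \<Rightarrow> nat list \<Rightarrow> nat list \<Rightarrow> bool" where
  "is_CS_decomp m L S1 S2 \<longleftrightarrow>
     (\<exists>j. rotate j L = S1 @ S2 @ S1 @ S2) \<and>
     S1 \<noteq> [] \<and> S2 \<noteq> [] \<and> rev S1 = S1 \<and> rev S2 = S2 \<and>
     cyc_occ L S1 = 2 \<and> cyc_occ L S2 = 2 \<and>
     hd S1 = m + 1 \<and> last S1 = m + 1 \<and> hd S2 = m \<and> last S2 = m"

definition I1 :: "nat list \<Rightarrow> nat \<Rightarrow> rat set" where
  "I1 ms n = (if even (length ms)
     then {0 .. cf (butlast ms @ [last ms - 1, 2])}
     else {0 ..< cf (ms @ [2 * n - 2])})"

definition I2 :: "nat list \<Rightarrow> nat \<Rightarrow> rat set" where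
  "I2 ms n = (if even (length ms)
     then {cf (ms @ [2 * n - 2]) <.. 1}
     else {cf (butlast ms @ [last ms - 1, 2]) .. 1})"

end

theory Submission
  imports Defs
begin

text \<open>
  For \<open>s = q/p\<close> in \<open>(0, 1]\<close> the exponents of \<open>u\<^sub>s\<close> are \<open>(-1)^\<lfloor>i q / p\<rfloor>\<close>, so \<open>CS(s)\<close> is the
  cyclic sequence of gaps \<open>\<lceil>(c + 1)/s\<rceil> - \<lceil>c/s\<rceil>\<close>, \<open>c = 1, \<dots>, 2q\<close>.  Write \<open>r = a/b\<close> and let \<open>e/f\<close>
  (\<open>e b - f a = 1\<close>, \<open>0 < e < a\<close>) come from the last two convergents of \<open>r\<close>.  The gap sequence of
  slope \<open>b/a\<close> has period \<open>a\<close> and is invariant under the shifts by \<open>e\<close> and by \<open>a - e\<close> away from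
  the residues \<open>0\<close> and \<open>e\<close>; as \<open>S\<^sub>1\<close> and \<open>S\<^sub>2\<close> occur only twice, they are the gaps over
  \<open>[0, e)\<close> and \<open>[e, a)\<close> modulo \<open>a\<close>.  So the forbidden pattern is a window of about \<open>(2n - 2) a\<close>
  gaps of slope \<open>b/a\<close>.  Were it contained in \<open>CS(s)\<close>, sums of \<open>k\<close> consecutive gaps would agree
  with sums of gaps of slope \<open>1/s\<close>, which equal \<open>k/s\<close> up to an error below 1; two well-chosen
  subwindows then place \<open>s\<close> strictly between the endpoints of the complement of \<open>I\<^sub>1 \<union> I\<^sub>2\<close>.
\<close>

section \<open>Blocks of lists and periodic sequences\<close>

lemma runs_replicate_append:
  assumes "0 < n" "ys = [] \<or> hd ys \<noteq> x"
  shows "runs (replicate n x @ ys) = n # runs ys"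
proof -
  obtain n' where n: "n = Suc n'" using assms(1) by (cases n) auto
  have "takeWhile (\<lambda>y. y = x) ys = []" and "dropWhile (\<lambda>y. y = x) ys = ys"
    using assms(2) by (cases ys; auto)+
  then have "takeWhile (\<lambda>y. y = x) (replicate n' x @ ys) = replicate n' x"
    and "dropWhile (\<lambda>y. y = x) (replicate n' x @ ys) = ys"
    by (subst takeWhile_append2 dropWhile_append2; auto)+
  then show ?thesis using n by simp
qed

lemma runs_concat_blocks:
  assumes "\<And>c. 0 < len c" "\<And>c. sg (Suc c) \<noteq> sg c"
  shows "runs (concat (map (\<lambda>c. replicate (len c) (sg c)) [a..<b])) = map len [a..<b]"
proof (induction "b - a" arbitrary: a)
  case 0
  then show ?case by simp
next
  case (Suc k)
  then have u: "[a..<b] = a # [Suc a..<b]" by (simp add: upt_rec)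
  let ?rest = "concat (map (\<lambda>c. replicate (len c) (sg c)) [Suc a..<b])"
  have "?rest = [] \<or> hd ?rest \<noteq> sg a"
  proof (cases "Suc a < b")
    case True
    then have "[Suc a..<b] = Suc a # [Suc (Suc a)..<b]" by (simp add: upt_rec)
    moreover obtain k where "len (Suc a) = Suc k" using assms(1) not0_implies_Suc by blast
    ultimately show ?thesis using assms(2)[of a] by simp
  qed simp
  then show ?case using Suc runs_replicate_append[OF assms(1)] unfolding u by simp
qed

lemma upt_eq_concat_blocks:
  assumes "mono B" "a \<le> b"
  shows "[B a..<B b] = concat (map (\<lambda>c. [B c..<B (Suc c)]) [a..<b])"
  using assms(2)
proof (induction b)
  case (Suc b)
  show ?case
  proof (cases "a = Suc b")
    case False
    then have ab: "a \<le> b" using Suc by simp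
    have "B a \<le> B b" "B b \<le> B (Suc b)" using assms(1) ab by (simp_all add: monoD)
    then have "[B a..<B (Suc b)] = [B a..<B b] @ [B b..<B (Suc b)]"
      using upt_add_eq_append[of "B a" "B b" "B (Suc b) - B b"] by simp
    then show ?thesis using Suc.IH[OF ab] ab by simp
  qed simp
qed simp

lemma map_upt_shift_period:
  assumes "\<And>i. f (i + N) = f i"
  shows "map f [a + N..<b + N] = map f [a..<b]"
proof (rule nth_equalityI)
  fix i assume "i < length (map f [a + N..<b + N])"
  then show "map f [a + N..<b + N] ! i = map f [a..<b] ! i"
    using assms[of "a + i"] by (simp add: ac_simps)
qed simp

lemma rotate_map_upt_period:
  assumes "\<And>i. f (i + N) = f i" "j < N"
  shows "rotate j (map f [a..<a + N]) = map f [a + j..<a + j + N]"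
proof -
  have "rotate j (map f [a..<a + N]) = map f [a + j..<a + N] @ map f [a..<a + j]"
    using assms(2) by (simp add: rotate_drop_take drop_map take_map)
  also have "map f [a..<a + j] = map f [a + N..<a + j + N]"
    using map_upt_shift_period[of f N a "a + j", OF assms(1)] by simp
  also have "map f [a + j..<a + N] @ \<dots> = map f [a + j..<a + j + N]"
    using upt_add_eq_append[of "a + j" "a + N" j] assms(2) by (simp add: ac_simps)
  finally show ?thesis .
qed

lemma take_rotate_map_upt_period:
  assumes "\<And>i. f (i + N) = f i" "j < N" "l \<le> N"
  shows "take l (rotate j (map f [1..<N + 1])) = map f [1 + j..<1 + j + l]"
proof -
  have "take l [1 + j..<1 + j + N] = [1 + j..<1 + j + l]" using assms(3) by (simp del: upt_Suc)
  then show ?thesis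
    using rotate_map_upt_period[of f N j 1, OF assms(1,2)] by (simp only: add.commute[of N 1] take_map)
qed

section \<open>Ceiling sequences\<close>

definition ceil_mult :: "rat \<Rightarrow> nat \<Rightarrow> int" where
  "ceil_mult t c = \<lceil>of_nat c * t\<rceil>"

definition ceil_gap :: "rat \<Rightarrow> nat \<Rightarrow> nat" where
  "ceil_gap t c = nat (ceil_mult t (Suc c) - ceil_mult t c)"

lemma ceil_mult_0 [simp]: "ceil_mult t 0 = 0"
  by (simp add: ceil_mult_def)

lemma ceil_mult_nonneg: "0 \<le> t \<Longrightarrow> 0 \<le> ceil_mult t c"
proof -
  assume "0 \<le> t"
  then have "0 \<le> of_nat c * t" by simp
  then show ?thesis unfolding ceil_mult_def by linarith
qed

lemma ceil_mult_mono: "0 \<le> t \<Longrightarrow> c \<le> d \<Longrightarrow> ceil_mult t c \<le> ceil_mult t d"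
  unfolding ceil_mult_def by (intro ceiling_mono mult_right_mono) auto

lemma ceil_mult_Suc_gt: "1 \<le> t \<Longrightarrow> ceil_mult t c < ceil_mult t (Suc c)"
proof -
  assume "1 \<le> t"
  then have "of_nat c * t + 1 \<le> of_nat (Suc c) * t" by (simp add: algebra_simps)
  then have "\<lceil>of_nat c * t + 1\<rceil> \<le> \<lceil>of_nat (Suc c) * t\<rceil>" by (rule ceiling_mono)
  then show ?thesis unfolding ceil_mult_def by simp
qed

lemma ceil_mult_add_period:
  assumes "of_nat N * t = of_int z"
  shows "ceil_mult t (c + N) = ceil_mult t c + z"
proof -
  have "of_nat (c + N) * t = of_nat c * t + of_int z" using assms by (simp add: algebra_simps)
  then show ?thesis unfolding ceil_mult_def by simp
qed

lemma ceil_gap_period: "of_nat N * t = of_int z \<Longrightarrow> ceil_gap t (c + N) = ceil_gap t c"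
  unfolding ceil_gap_def using ceil_mult_add_period[of N t z c] ceil_mult_add_period[of N t z "Suc c"] by simp

lemma int_ceil_gap: "0 \<le> t \<Longrightarrow> int (ceil_gap t c) = ceil_mult t (Suc c) - ceil_mult t c"
  unfolding ceil_gap_def using ceil_mult_mono[of t c "Suc c"] by simp

lemma sum_ceil_gap:
  assumes "0 \<le> t" "k1 \<le> k2"
  shows "(\<Sum>i = k1..<k2. int (ceil_gap t (y + i))) = ceil_mult t (y + k2) - ceil_mult t (y + k1)"
  using sum_Suc_diff'[OF assms(2), of "\<lambda>i. ceil_mult t (y + i)"] int_ceil_gap[OF assms(1)] by simp

lemma ceiling_diff_bounds:
  fixes x y :: "'a :: floor_ceiling"
  shows "of_int (\<lceil>x\<rceil> - \<lceil>y\<rceil>) - 1 < x - y \<and> x - y < of_int (\<lceil>x\<rceil> - \<lceil>y\<rceil>) + 1"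
  using ceiling_correct[of x] ceiling_correct[of y] by (simp only: of_int_diff) linarith

section \<open>The sequence \<open>CS\<close> of a slope\<close>

lemma quotient_of_pos:
  assumes qs: "quotient_of s = (q, p)" and s: "0 < s"
  shows "0 < p" "0 < q" "1 / s = of_int p / of_int q"
proof -
  show p: "0 < p" using qs quotient_of_denom_pos by blast
  have sq: "s = of_int q / of_int p" using qs quotient_of_div by blast
  show "0 < q" using s p unfolding sq by (simp add: zero_less_divide_iff)
  show "1 / s = of_int p / of_int q" unfolding sq by simp
qed

lemma eps_reflect:
  assumes p: "0 < p" and cop: "coprime q p" and i: "0 < i" "i < nat p"
  shows "eps q p (nat p + i) = - eps q p (nat p - i)"
proof -
  have nd: "(int i * q) mod p \<noteq> 0"
  proof
    assume "(int i * q) mod p = 0"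
    then have "p dvd int i" using cop by (auto simp: coprime_commute coprime_dvd_mult_left_iff)
    then show False using i p by (auto dest: zdvd_imp_le)
  qed
  have e1: "int (nat p + i) * q = int i * q + q * p" using p by (simp add: algebra_simps)
  have e2: "int (nat p - i) * q = - (int i * q) + q * p" using p i by (simp add: algebra_simps of_nat_diff)
  have "(int (nat p + i) * q) div p = (int i * q) div p + q" unfolding e1 using p by simp
  moreover have "(int (nat p - i) * q) div p = - ((int i * q) div p) - 1 + q"
    unfolding e2 using div_mult_self1[of p "- (int i * q)" q] p nd by (simp add: zdiv_zminus1_eq_if)
  ultimately show ?thesis unfolding eps_def by auto
qed

lemma eps_period: "0 < p \<Longrightarrow> eps q p (i + 2 * nat p) = eps q p i"
proof -
  assume "0 < p"
  then have "int (i + 2 * nat p) * q = int i * q + (2 * q) * p" by (simp add: algebra_simps)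
  then have "(int (i + 2 * nat p) * q) div p = (int i * q) div p + 2 * q" using \<open>0 < p\<close> by simp
  then show ?thesis unfolding eps_def by simp
qed

lemma signs_u_word:
  assumes qs: "quotient_of s = (q, p)"
  shows "map snd (u_word s) = map (eps q p) [0..<2 * nat p]"
proof -
  have p: "0 < p" using qs quotient_of_denom_pos by blast
  have cop: "coprime q p" using qs quotient_of_coprime by blast
  define P where "P = nat p"
  have P1: "1 \<le> P" using p P_def by simp
  have mid: "eps q p P = (if odd p then (if even q then 1 else -1) else -1)"
  proof -
    have "odd q" if "even p" using that cop by (metis coprime_common_divisor dvd_refl even_add odd_one)
    then show ?thesis using p unfolding eps_def P_def by auto
  qed
  have tail: "map (eps q p) [Suc P..<2 * P] = rev (map (\<lambda>i. - eps q p i) [1..<P])"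
  proof (rule nth_equalityI)
    fix k assume "k < length (map (eps q p) [Suc P..<2 * P])"
    then have k: "k + 1 < P" by simp
    have "eps q p (P + (k + 1)) = - eps q p (P - (k + 1))"
      using eps_reflect[OF p cop, of "k + 1"] k P_def by simp
    then show "map (eps q p) [Suc P..<2 * P] ! k = rev (map (\<lambda>i. - eps q p i) [1..<P]) ! k"
      using k nth_upt[of "Suc 0" "P - Suc (Suc k)" P] Suc_diff_Suc[of "Suc k" P]
      by (simp add: rev_nth nth_map_upt)
  qed simp
  have "[0..<2 * P] = [0] @ [1..<P] @ [P] @ [Suc P..<2 * P]"
    using P1 upt_add_eq_append[of 1 P P] by (simp add: upt_rec mult_2)
  then have "map (eps q p) [0..<2 * P]
      = [1] @ map (eps q p) [1..<P] @ [eps q p P] @ rev (map (\<lambda>i. - eps q p i) [1..<P])"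
    using tail by (simp add: eps_def)
  moreover have "map snd (u_word s)
      = [1] @ map (eps q p) [1..<P] @ [eps q p P] @ rev (map (\<lambda>i. - eps q p i) [1..<P])"
    unfolding u_word_def hat_u_def winv_def qs P_def[symmetric] mid
    by (simp add: rev_map[symmetric] comp_def P_def)
  ultimately show ?thesis unfolding P_def by simp
qed

lemma eps_on_ceil_block:
  assumes qs: "quotient_of s = (q, p)" and s: "0 < s"
    and j: "ceil_mult (1 / s) c \<le> int j" "int j < ceil_mult (1 / s) (Suc c)"
  shows "eps q p j = (if even c then 1 else -1)"
proof -
  note f = quotient_of_pos[OF qs s]
  have "of_nat c * (of_int p / of_int q) \<le> (of_nat j :: rat)"
    "(of_nat j :: rat) < of_nat (Suc c) * (of_int p / of_int q)"
    using j f(3) unfolding ceil_mult_def by (simp_all add: ceiling_le_iff less_ceiling_iff)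
  then have "of_int (int c) \<le> (of_int (int j * q) / of_int p :: rat)"
    "(of_int (int j * q) / of_int p :: rat) < of_int (int c) + 1"
    using f(1,2) by (simp_all add: field_simps)
  then have "\<lfloor>of_int (int j * q) / of_int p :: rat\<rfloor> = int c" by (rule floor_unique)
  then have "(int j * q) div p = int c" unfolding floor_divide_of_int_eq .
  then show ?thesis unfolding eps_def by simp
qed

lemma CS_word_blocks:
  fixes g :: "nat \<Rightarrow> int" and B :: "nat \<Rightarrow> nat"
  assumes per: "\<And>i. g (i + L) = g i"
    and blk: "\<And>c j. B c \<le> j \<Longrightarrow> j < B (Suc c) \<Longrightarrow> g j = (if even c then 1 else -1)"
    and B_less: "\<And>c. B c < B (Suc c)" and B0: "B 0 = 0" and B1: "B 1 < L"
    and BK: "B (Suc K) = B 1 + L"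
    and w: "map snd w = map g [0..<L]"
  shows "CS_word w = map (\<lambda>c. B (Suc c) - B c) [1..<Suc K]"
proof -
  define es where "es = map snd w"
  define T where "T = B 1"
  have es_nth: "es ! i = g i" if "i < L" for i using that unfolding es_def w by simp
  have T_less: "T < length es" using B1 unfolding es_def w T_def by simp
  have "es \<noteq> []" using T_less by auto
  then have hd: "hd es = 1"
    using B1 es_nth[of 0] blk[of 0 0] B_less[of 0] B0 by (simp add: hd_conv_nth)
  have esT: "es ! T = -1" using es_nth[of T] blk[of 1 T] B_less[of 1] B1 unfolding T_def by simp
  have "\<not> (\<forall>e\<in>set es. e = hd es)" using esT T_less hd nth_mem by fastforce
  moreover have "takeWhile (\<lambda>e. e = hd es) es = take T es"
  proof (rule takeWhile_eq_take_P_nth)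
    fix i assume "i < T" "i < length es"
    then show "es ! i = hd es" using es_nth[of i] blk[of 0 i] B0 hd unfolding T_def es_def w by simp
  qed (use esT hd in simp)
  ultimately have CS: "CS_word w = runs (rotate T es)"
    unfolding CS_word_def es_def[symmetric] Let_def using T_less by auto
  have mono: "mono B" using B_less by (simp add: mono_iff_le_Suc less_imp_le)
  have "rotate T es = map g [T..<T + L]"
    using rotate_map_upt_period[of g L T 0, OF per] B1 unfolding es_def w T_def by simp
  also have "[T..<T + L] = concat (map (\<lambda>c. [B c..<B (Suc c)]) [1..<Suc K])"
    using upt_eq_concat_blocks[OF mono, of 1 "Suc K"] BK unfolding T_def by simp
  moreover have "map g [B c..<B (Suc c)] = replicate (B (Suc c) - B c) (if even c then 1 else -1)" for c
  proof -
    have "map g [B c..<B (Suc c)] = map (\<lambda>_. if even c then 1 else -1) [B c..<B (Suc c)]"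
      using blk[of c] by (intro map_cong) auto
    then show ?thesis by (simp add: map_replicate_const)
  qed
  ultimately have "rotate T es
      = concat (map (\<lambda>c. replicate (B (Suc c) - B c) (if even c then 1 else -1)) [1..<Suc K])"
    by (simp only: map_concat map_map comp_def)
  then show ?thesis unfolding CS by (simp only:) (rule runs_concat_blocks, use B_less in auto)
qed

lemma CS_eq_ceil_gaps:
  assumes qs: "quotient_of s = (q, p)" and s: "0 < s" "s \<le> 1"
  shows "CS s = map (ceil_gap (1 / s)) [1..<2 * nat q + 1]"
proof -
  note f = quotient_of_pos[OF qs s(1)]
  define t where "t = 1 / s"
  define B where "B c = nat (ceil_mult t c)" for c
  have t1: "1 \<le> t" using s unfolding t_def by simp
  have B_int: "int (B c) = ceil_mult t c" for c
    unfolding B_def using ceil_mult_nonneg[of t c] t1 by simp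
  have B_less: "B c < B (Suc c)" for c
    using ceil_mult_Suc_gt[OF t1, of c] B_int[of c] B_int[of "Suc c"] by linarith
  have "of_nat (nat q) * t = of_int p" unfolding t_def f(3) using f(2) by simp
  then have "of_nat (2 * nat q) * t = of_int (2 * p)" by (simp add: algebra_simps)
  then have "ceil_mult t (1 + 2 * nat q) = ceil_mult t 1 + 2 * p" by (rule ceil_mult_add_period)
  then have BK: "B (Suc (2 * nat q)) = B 1 + 2 * nat p"
    using B_int[of 1] B_int[of "Suc (2 * nat q)"] f(1) by simp
  have "t \<le> of_int p" unfolding t_def f(3) using f(1,2) by (simp add: divide_le_eq)
  then have "B 1 \<le> nat p" unfolding B_def ceil_mult_def by (simp add: ceiling_le_iff nat_le_iff)
  then have B1: "B 1 < 2 * nat p" using f(1) by simp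
  have B0: "B 0 = 0" unfolding B_def by simp
  have blk: "eps q p j = (if even c then 1 else -1)" if "B c \<le> j" "j < B (Suc c)" for c j
    using eps_on_ceil_block[OF qs s(1), of c j] that B_int[of c] B_int[of "Suc c"] unfolding t_def by simp
  have "CS s = map (\<lambda>c. B (Suc c) - B c) [1..<Suc (2 * nat q)]"
    unfolding CS_def
    by (rule CS_word_blocks[OF eps_period[OF f(1)] blk B_less B0 B1 BK signs_u_word[OF qs]])
  also have "\<dots> = map (ceil_gap t) [1..<2 * nat q + 1]"
    unfolding ceil_gap_def B_int[symmetric] nat_minus_as_int by simp
  finally show ?thesis unfolding t_def .
qed

lemma CS_zero: "CS 0 = [2]"
  by (simp add: CS_def CS_word_def u_word_def hat_u_def winv_def rat_zero_code)

lemma cyc_contains_CS_pos: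
  assumes "0 \<le> s" "cyc_contains (CS s) P" "2 \<le> length P"
  shows "0 < s"
  using assms CS_zero unfolding cyc_contains_def by (cases "s = 0") auto

lemma CS_window_ceil_gaps:
  assumes s: "0 < s" "s \<le> 1" and cc: "cyc_contains (CS s) (map F [z..<z + l])"
  obtains y where "\<And>i. i < l \<Longrightarrow> ceil_gap (1 / s) (y + i) = F (z + i)"
proof -
  obtain q p where qs: "quotient_of s = (q, p)" by (cases "quotient_of s") auto
  note f = quotient_of_pos[OF qs s(1)]
  define Q where "Q = 2 * nat q"
  have CS: "CS s = map (ceil_gap (1 / s)) [1..<Q + 1]" using CS_eq_ceil_gaps[OF qs s] unfolding Q_def .
  have "of_nat Q * (1 / s) = of_int (2 * p)" unfolding Q_def f(3) using f(2) by simp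
  then have per: "ceil_gap (1 / s) (i + Q) = ceil_gap (1 / s) i" for i by (rule ceil_gap_period)
  obtain j where j: "j < Q" "l \<le> Q" "take l (rotate j (CS s)) = map F [z..<z + l]"
    using cc unfolding cyc_contains_def CS by (auto simp del: upt_Suc)
  then have eq: "map (ceil_gap (1 / s)) [1 + j..<1 + j + l] = map F [z..<z + l]"
    using take_rotate_map_upt_period[of "ceil_gap (1 / s)" Q j l, OF per j(1,2)] unfolding CS by (simp del: upt_Suc)
  have "ceil_gap (1 / s) (1 + j + i) = F (z + i)" if "i < l" for i
    using arg_cong[OF eq, of "\<lambda>xs. xs ! i"] that by (simp del: upt_Suc)
  then show ?thesis using that by blast
qed

lemma CS_window_slope:
  assumes s: "0 < s" "s \<le> 1" and cc: "cyc_contains (CS s) (map F [z..<z + l])"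
    and F: "\<And>c. int (F c) = G (Suc c) - G c" and k: "k1 \<le> k2" "k2 \<le> l"
  shows "of_int (G (z + k2) - G (z + k1) - 1) * s < of_nat (k2 - k1)"
    and "of_nat (k2 - k1) < of_int (G (z + k2) - G (z + k1) + 1) * s"
proof -
  obtain y where y: "\<And>i. i < l \<Longrightarrow> ceil_gap (1 / s) (y + i) = F (z + i)"
    using CS_window_ceil_gaps[OF s cc] by blast
  define X where "X = of_nat (y + k2) * (1 / s)"
  define Y where "Y = of_nat (y + k1) * (1 / s)"
  have "0 \<le> 1 / s" using s by simp
  have "G (z + k2) - G (z + k1) = (\<Sum>i = k1..<k2. int (F (z + i)))"
    using sum_Suc_diff'[OF k(1), of "\<lambda>i. G (z + i)"] F by simp
  also have "\<dots> = (\<Sum>i = k1..<k2. int (ceil_gap (1 / s) (y + i)))"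
    using y k by (intro sum.cong) auto
  also have "\<dots> = \<lceil>X\<rceil> - \<lceil>Y\<rceil>"
    using sum_ceil_gap[OF \<open>0 \<le> 1 / s\<close> k(1)] unfolding ceil_mult_def X_def Y_def .
  finally have G: "G (z + k2) - G (z + k1) = \<lceil>X\<rceil> - \<lceil>Y\<rceil>" .
  have "X - Y = of_nat (k2 - k1) / s"
    unfolding X_def Y_def using k(1) by (simp add: of_nat_diff diff_divide_distrib add_divide_distrib)
  then have "of_int (G (z + k2) - G (z + k1)) - 1 < of_nat (k2 - k1) / s
      \<and> of_nat (k2 - k1) / s < of_int (G (z + k2) - G (z + k1)) + 1"
    using ceiling_diff_bounds[of X Y] unfolding G by simp
  then show "of_int (G (z + k2) - G (z + k1) - 1) * s < of_nat (k2 - k1)"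
    and "of_nat (k2 - k1) < of_int (G (z + k2) - G (z + k1) + 1) * s"
    using s(1) by (simp_all add: field_simps)
qed

section \<open>Continued fractions\<close>

fun cf_apply :: "nat list \<Rightarrow> int \<times> int \<Rightarrow> int \<times> int" where
  "cf_apply [] v = v"
| "cf_apply (m # ms) v = (snd (cf_apply ms v), int m * snd (cf_apply ms v) + fst (cf_apply ms v))"

lemma cf_apply_append: "cf_apply (xs @ ys) v = cf_apply xs (cf_apply ys v)"
  by (induction xs) auto

lemma cf_apply_linear:
  "cf_apply xs (A, B) = (A * fst (cf_apply xs (1, 0)) + B * fst (cf_apply xs (0, 1)),
                         A * snd (cf_apply xs (1, 0)) + B * snd (cf_apply xs (0, 1)))"
  by (induction xs) (auto simp: algebra_simps)

lemma cf_apply_det: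
  "fst (cf_apply xs (1, 0)) * snd (cf_apply xs (0, 1)) - fst (cf_apply xs (0, 1)) * snd (cf_apply xs (1, 0))
     = (-1) ^ length xs"
  by (induction xs) (simp_all add: algebra_simps)

lemma cf_append_frac:
  assumes "\<forall>x\<in>set xs. 0 < x" "0 \<le> A" "0 < B" "cf ys = of_int A / of_int B"
  shows "0 \<le> fst (cf_apply xs (A, B)) \<and> 0 < snd (cf_apply xs (A, B)) \<and>
         cf (xs @ ys) = of_int (fst (cf_apply xs (A, B))) / of_int (snd (cf_apply xs (A, B)))"
  using assms(1)
proof (induction xs)
  case (Cons m xs)
  obtain a b where ab: "cf_apply xs (A, B) = (a, b)" by fastforce
  then have ih: "0 \<le> a" "0 < b" "cf (xs @ ys) = of_int a / of_int b" using Cons by auto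
  have "b \<le> int m * b" using Cons.prems ih(2) by simp
  then have pos: "0 < int m * b + a" using ih by linarith
  have "cf ((m # xs) @ ys) = 1 / (of_nat m + of_int a / of_int b)" using ih by simp
  also have "\<dots> = of_int b / of_int (int m * b + a)" using ih(2) pos by (simp add: field_simps)
  finally show ?case using ih pos ab by simp
qed (use assms in simp)

lemma cf_apply_bounds:
  assumes "xs \<noteq> []" "\<forall>x\<in>set xs. 0 < x" "2 \<le> last xs"
  shows "0 \<le> fst (cf_apply xs (1, 0)) \<and> fst (cf_apply xs (1, 0)) < fst (cf_apply xs (0, 1)) \<and>
         1 \<le> fst (cf_apply xs (0, 1)) \<and> fst (cf_apply xs (0, 1)) < snd (cf_apply xs (0, 1)) \<and>
         0 < snd (cf_apply xs (1, 0)) \<and> snd (cf_apply xs (1, 0)) < snd (cf_apply xs (0, 1))"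
  using assms
proof (induction xs)
  case (Cons m xs)
  show ?case
  proof (cases "xs = []")
    case False
    obtain a1 b1 a2 b2 where v: "cf_apply xs (1, 0) = (a1, b1)" "cf_apply xs (0, 1) = (a2, b2)"
      by fastforce
    have ih: "0 \<le> a1" "a1 < a2" "1 \<le> a2" "a2 < b2" "0 < b1" "b1 < b2" using Cons False v by auto
    have "1 \<le> int m" using Cons.prems by simp
    then have "b1 \<le> int m * b1" "b2 \<le> int m * b2" "int m * b1 \<le> int m * b2"
      using ih by (simp_all add: mult_left_mono)
    then show ?thesis using ih v by (simp; intro conjI; linarith)
  qed (use Cons in simp)
qed simp

lemma cf_in_unit_interval: "\<forall>x\<in>set xs. 0 < x \<Longrightarrow> 0 \<le> cf xs \<and> cf xs \<le> 1"
proof (induction xs)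
  case (Cons x xs)
  then have "1 \<le> of_nat x + cf xs" by simp
  then show ?case by simp
qed simp

lemma cf_append_digit:
  assumes "\<forall>x\<in>set xs. 0 < x" "0 < N"
  shows "cf (xs @ [N]) = of_int (fst (cf_apply xs (1, 0)) + int N * fst (cf_apply xs (0, 1)))
                      / of_int (snd (cf_apply xs (1, 0)) + int N * snd (cf_apply xs (0, 1)))"
proof -
  have "cf [N] = of_int 1 / of_int (int N)" by simp
  then show ?thesis
    using cf_append_frac[OF assms(1), of 1 "int N" "[N]"] assms(2) by (simp add: cf_apply_linear[of xs 1 "int N"])
qed

lemma cf_append_pred_2:
  assumes "\<forall>x\<in>set xs. 0 < x" "2 \<le> k"
  shows "cf (xs @ [k - 1, 2]) = of_int (2 * fst (cf_apply xs (1, int k)) - fst (cf_apply xs (0, 1)))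
                              / of_int (2 * snd (cf_apply xs (1, int k)) - snd (cf_apply xs (0, 1)))"
proof -
  have "cf [k - 1, 2] = 1 / (of_nat (k - 1) + 1 / 2)" by simp
  also have "\<dots> = of_int 2 / of_int (2 * int k - 1)" using assms(2) by (simp add: of_nat_diff field_simps)
  finally have "cf (xs @ [k - 1, 2])
      = of_int (fst (cf_apply xs (2, 2 * int k - 1))) / of_int (snd (cf_apply xs (2, 2 * int k - 1)))"
    using cf_append_frac[OF assms(1), of 2 "2 * int k - 1" "[k - 1, 2]"] assms(2) by simp
  then show ?thesis
    by (simp only: cf_apply_linear[of xs 2 "2 * int k - 1"] cf_apply_linear[of xs 1 "int k"])
       (simp add: algebra_simps)
qed

lemma last_convergents:
  assumes len: "2 \<le> length ms" and pos: "\<forall>x\<in>set ms. 0 < x" and last: "2 \<le> last ms"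
  obtains A2 B2 A1 B1 :: int where
    "cf ms = of_int A2 / of_int B2" "A1 * B2 - A2 * B1 = (-1) ^ length ms"
    "1 \<le> A1" "A1 < A2" "B2 div A2 = int (hd ms)"
    "cf (butlast ms @ [last ms - 1, 2]) = of_int (2 * A2 - A1) / of_int (2 * B2 - B1)"
    "\<And>N. 0 < N \<Longrightarrow> cf (ms @ [N]) = of_int (A1 + int N * A2) / of_int (B1 + int N * B2)"
proof -
  obtain m rest where ms: "ms = m # rest" and rest: "rest \<noteq> []"
    using len by (cases ms; cases "tl ms") auto
  define A1 where "A1 = fst (cf_apply ms (1, 0))"
  define A2 where "A2 = fst (cf_apply ms (0, 1))"
  define B1 where "B1 = snd (cf_apply ms (1, 0))"
  define B2 where "B2 = snd (cf_apply ms (0, 1))"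
  have "A1 < A2" using cf_apply_bounds[of ms] ms pos last unfolding A1_def A2_def by simp
  have rest_bounds: "0 < snd (cf_apply rest (1, 0))" "1 \<le> fst (cf_apply rest (0, 1))"
    "fst (cf_apply rest (0, 1)) < snd (cf_apply rest (0, 1))"
    using cf_apply_bounds[OF rest] pos last ms rest by auto
  have A1: "A1 = snd (cf_apply rest (1, 0))" and A2: "A2 = snd (cf_apply rest (0, 1))"
    and B2: "B2 = int m * A2 + fst (cf_apply rest (0, 1))"
    unfolding A1_def A2_def B2_def ms by simp_all
  have "1 \<le> A1" using A1 rest_bounds by simp
  have "A1 * B2 - A2 * B1 = (-1) ^ length ms"
    unfolding A1_def A2_def B1_def B2_def by (rule cf_apply_det)
  have "B2 div A2 = int (hd ms)" unfolding B2 using rest_bounds A2 ms by simp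
  have "cf ms = of_int A2 / of_int B2"
    using cf_append_frac[OF pos, of 0 1 "[]"] unfolding A2_def B2_def by simp
  have "cf (butlast ms @ [last ms - 1, 2]) = of_int (2 * A2 - A1) / of_int (2 * B2 - B1)"
  proof -
    define ns where "ns = butlast ms"
    define k where "k = last ms"
    have "ms = ns @ [k]" unfolding ns_def k_def using ms by simp
    then have "A1 = fst (cf_apply ns (0, 1))" "B1 = snd (cf_apply ns (0, 1))"
      "A2 = fst (cf_apply ns (1, int k))" "B2 = snd (cf_apply ns (1, int k))"
      unfolding A1_def A2_def B1_def B2_def by (simp_all add: cf_apply_append)
    then show ?thesis
      using cf_append_pred_2[of ns k] pos last unfolding ns_def k_def by (simp add: in_set_butlastD)
  qed
  have "cf (ms @ [N]) = of_int (A1 + int N * A2) / of_int (B1 + int N * B2)" if "0 < N" for N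
    using cf_append_digit[OF pos that] unfolding A1_def A2_def B1_def B2_def .
  show thesis by (rule that) fact+
qed

lemma I1_I2_unit_interval:
  assumes "\<forall>x\<in>set ms. 0 < x" "2 \<le> last ms" "2 \<le> n" "s \<in> I1 ms n \<union> I2 ms n"
  shows "0 \<le> s" "s \<le> 1"
proof -
  have "0 \<le> cf (butlast ms @ [last ms - 1, 2]) \<and> cf (butlast ms @ [last ms - 1, 2]) \<le> 1"
    "0 \<le> cf (ms @ [2 * n - 2]) \<and> cf (ms @ [2 * n - 2]) \<le> 1"
    using cf_in_unit_interval[of "butlast ms @ [last ms - 1, 2]"] cf_in_unit_interval[of "ms @ [2 * n - 2]"]
      assms(1-3) by (auto dest: in_set_butlastD)
  then show "0 \<le> s" "s \<le> 1" using assms(4) unfolding I1_def I2_def by (auto split: if_splits)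
qed

section \<open>Gaps of a slope with a unimodular neighbour\<close>

lemma int_mod_eqI: "0 \<le> y \<Longrightarrow> y < n \<Longrightarrow> x = y + k * n \<Longrightarrow> x mod n = (y :: int)"
  by simp

lemma residue_at_window_boundary:
  fixes a :: nat
  assumes l: "l \<le> a" and "\<exists>d\<le>l. (x + d) mod a = v" and "\<exists>d\<le>a - l. (x + l + d) mod a = v"
  shows "x mod a = v \<or> (x + l) mod a = v"
proof -
  obtain d1 d2 where d1: "d1 \<le> l" "(x + d1) mod a = v" and d2: "l \<le> d2" "d2 \<le> a" "(x + d2) mod a = v"
    using assms by (metis add.assoc le_add1 le_diff_conv2 add.commute)
  then have "a dvd (x + d2) - (x + d1)" using mod_eq_dvd_iff_nat[of "x + d1" "x + d2" a] by simp
  then obtain k where k: "d2 - d1 = a * k" by auto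
  have "d2 - d1 = 0 \<or> d2 - d1 = a"
  proof (cases "k = 0")
    case False
    then have "a \<le> a * k" by simp
    then show ?thesis using k d2(2) by (metis diff_le_self le_antisym order_trans)
  qed (use k in simp)
  then show ?thesis
  proof
    assume "d2 - d1 = 0"
    then have "d1 = l" using d1(1) d2(1) by simp
    then show ?thesis using d1 by simp
  next
    assume "d2 - d1 = a"
    then have "d1 = 0" using d1(1) d2(1,2) by simp
    then show ?thesis using d1 by simp
  qed
qed

locale unimodular_slope =
  fixes a :: nat and b :: int and m :: nat and e :: nat and f :: int
  assumes a_ge_2: "2 \<le> a" and e_pos: "0 < e" and e_less: "e < a"
    and det: "int e * b = f * int a + 1" and b_div: "b div int a = int m" and m_pos: "0 < m"
begin

text \<open>The fraction \<open>a/b\<close> plays the role of \<open>r\<close>; \<open>C\<close> and \<open>D\<close> are the ceiling sequence of slope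
  \<open>t = b/a = 1/r\<close> and its gaps, and \<open>H c \<in> [0, a)\<close> is the rounding defect \<open>a C c - c b\<close>.\<close>

definition t :: rat where "t = of_int b / of_nat a"

abbreviation C :: "nat \<Rightarrow> int" where "C \<equiv> ceil_mult t"
abbreviation D :: "nat \<Rightarrow> nat" where "D \<equiv> ceil_gap t"

definition H :: "nat \<Rightarrow> int" where "H c = (- (int c * b)) mod int a"

lemma a_pos: "0 < int a"
  using a_ge_2 by simp

lemma coprime_a_b: "coprime (int a) b"
proof (rule coprimeI)
  fix c assume "c dvd int a" "c dvd b"
  then have "c dvd int e * b - f * int a" by simp
  then show "is_unit c" using det by simp
qed

lemma b_mod_pos: "0 < b mod int a"
proof -
  have "\<not> int a dvd b"
    using coprime_a_b a_ge_2 coprime_absorb_left[of "int a" b] by auto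
  then have "b mod int a \<noteq> 0" by (simp add: dvd_eq_mod_eq_0)
  moreover have "0 \<le> b mod int a" using a_pos by simp
  ultimately show ?thesis by linarith
qed

lemma b_eq: "b = int m * int a + b mod int a"
  using div_mult_mod_eq[of b "int a"] b_div by (simp add: mult.commute)

lemma a_le_b: "int a \<le> b"
proof -
  have "1 * int a \<le> int m * int a" using m_pos by (intro mult_right_mono) auto
  then show ?thesis using b_eq b_mod_pos by linarith
qed

lemma t_ge_1: "1 \<le> t"
  unfolding t_def using a_le_b a_pos by simp

lemma f_bounds: "0 \<le> f" "f < b"
proof -
  have b: "0 < b" using a_le_b a_pos by linarith
  then have "int e * b < int a * b" using e_less by simp
  then have "f * int a < b * int a" using det by (simp add: mult.commute)
  then show "f < b" using a_pos by simp
  have "0 < int e * b" using e_pos b by simp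
  then have "0 \<le> f * int a" using det by simp
  then show "0 \<le> f" using a_pos by (simp add: zero_le_mult_iff)
qed

lemma C_eq: "int a * C c = int c * b + H c"
proof -
  have "C c = - \<lfloor>of_int (- (int c * b)) / of_int (int a) :: rat\<rfloor>"
    unfolding ceil_mult_def t_def by (simp add: ceiling_def)
  also have "\<dots> = - ((- (int c * b)) div int a)" by (simp only: floor_divide_of_int_eq)
  finally have "int a * C c = - ((- (int c * b)) div int a * int a)" by simp
  moreover have "(- (int c * b)) div int a * int a + H c = - (int c * b)"
    unfolding H_def by (rule div_mult_mod_eq)
  ultimately show ?thesis by linarith
qed

lemma H_bounds: "0 \<le> H c" "H c < int a"
  unfolding H_def using a_pos by auto

lemma C_add_mult: "C (c + N * a) = C c + int N * b"
  using a_pos by (intro ceil_mult_add_period[where z = "int N * b"]) (simp add: t_def)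

lemma D_add_mult: "D (c + N * a) = D c"
  using a_pos by (intro ceil_gap_period[where z = "int N * b"]) (simp add: t_def)

lemma D_mod_eq: "c mod a = c' mod a \<Longrightarrow> D c = D c'"
proof -
  have "D x = D (x mod a)" for x using D_add_mult[of "x mod a" "x div a"] by (simp add: mod_div_mult_eq)
  then show "c mod a = c' mod a \<Longrightarrow> D c = D c'" by metis
qed

lemma int_D: "int (D c) = C (Suc c) - C c"
  using t_ge_1 by (simp add: int_ceil_gap)

lemma H_eq_0_iff: "H c = 0 \<longleftrightarrow> c mod a = 0"
proof -
  have "H c = 0 \<longleftrightarrow> int a dvd int c * b" unfolding H_def by (simp add: dvd_eq_mod_eq_0[symmetric])
  also have "\<dots> \<longleftrightarrow> int a dvd int c" using coprime_a_b coprime_dvd_mult_left_iff by blast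
  also have "\<dots> \<longleftrightarrow> c mod a = 0" by (simp add: dvd_eq_mod_eq_0[symmetric])
  finally show ?thesis .
qed

lemma H_add_e: "c mod a \<noteq> 0 \<Longrightarrow> H (c + e) = H c - 1"
proof -
  assume c: "c mod a \<noteq> 0"
  have "- (int (c + e) * b) = (- (int c * b) - 1) + (- f) * int a"
    using det by (simp add: algebra_simps)
  then have "H (c + e) = (- (int c * b) - 1) mod int a" unfolding H_def by (simp only: mod_mult_self1)
  also have "\<dots> = (H c - 1) mod int a" unfolding H_def by (simp add: mod_diff_left_eq)
  also have "\<dots> = H c - 1" using H_eq_0_iff[of c] c H_bounds[of c] by simp
  finally show ?thesis .
qed

text \<open>As \<open>a D c = b + H (c + 1) - H c\<close>, a gap is unchanged when both defects drop by one.\<close>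

lemma D_add_e:
  assumes "c mod a \<noteq> 0" "Suc c mod a \<noteq> 0"
  shows "D (c + e) = D c"
proof -
  have "int a * int (D (c + e)) = int a * int (D c)"
    using C_eq[of "Suc (c + e)"] C_eq[of "c + e"] C_eq[of "Suc c"] C_eq[of c]
      H_add_e[OF assms(1)] H_add_e[OF assms(2)] unfolding int_D by (simp add: algebra_simps)
  then show ?thesis using a_pos by simp
qed

lemma D_add_a_minus_e:
  assumes "c mod a \<noteq> e" "Suc c mod a \<noteq> e"
  shows "D (c + (a - e)) = D c"
proof -
  have m0: "(c + (a - e)) mod a \<noteq> 0"
  proof
    assume "(c + (a - e)) mod a = 0"
    then have "(c + (a - e) + e) mod a = e mod a" by (metis mod_add_left_eq add_0)
    then show False using assms(1) e_less by simp
  qed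
  have m1: "Suc (c + (a - e)) mod a \<noteq> 0"
  proof
    assume "Suc (c + (a - e)) mod a = 0"
    then have "(Suc (c + (a - e)) + e) mod a = e mod a" by (metis mod_add_left_eq add_0)
    moreover have "Suc (c + (a - e)) + e = Suc c + a" using e_less by simp
    ultimately show False using assms(2) e_less mod_add_self2[of "Suc c" a] by simp
  qed
  have "D (c + (a - e) + e) = D (c + (a - e))" using m0 m1 by (rule D_add_e)
  moreover have "D (c + (a - e) + e) = D c" using D_add_mult[of c 1] e_less by simp
  ultimately show ?thesis by simp
qed

lemma C_1: "C 1 = int m + 1"
proof -
  have "H 1 = int a - b mod int a"
    unfolding H_def using b_eq b_mod_pos pos_mod_bound[OF a_pos, of b]
    by (intro int_mod_eqI[where k = "- int m - 1"]) (auto simp: algebra_simps)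
  then have "int a * C 1 = int a * (int m + 1)" using C_eq[of 1] b_eq by (simp add: algebra_simps)
  then show ?thesis using a_pos by simp
qed

lemma C_e: "C e = f + 1"
proof -
  have "H e = int a - 1"
    unfolding H_def using det a_ge_2 by (intro int_mod_eqI[where k = "- f - 1"]) (auto simp: algebra_simps)
  then have "int a * C e = int a * (f + 1)" using C_eq[of e] det by (simp add: algebra_simps)
  then show ?thesis using a_pos by simp
qed

lemma C_Suc_e: "C (Suc e) = f + int m + 1"
proof -
  have "H (Suc e) = int a - 1 - b mod int a"
    unfolding H_def using det b_eq b_mod_pos pos_mod_bound[OF a_pos, of b]
    by (intro int_mod_eqI[where k = "- f - int m - 1"]) (auto simp: algebra_simps)
  then have "int a * C (Suc e) = int a * (f + int m + 1)" using C_eq[of "Suc e"] det b_eq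
    by (simp add: algebra_simps)
  then show ?thesis using a_pos by simp
qed

lemma D_at_0: "c mod a = 0 \<Longrightarrow> D c = m + 1"
  using D_mod_eq[of c 0] C_1 unfolding ceil_gap_def by simp

lemma D_at_e: "c mod a = e \<Longrightarrow> D c = m"
  using D_mod_eq[of c e] e_less C_e C_Suc_e unfolding ceil_gap_def by simp

lemma CS_slope: "CS (of_int (int a) / of_int b) = map D [1..<2 * a + 1]"
proof -
  have "quotient_of (of_int (int a) / of_int b) = (int a, b)"
    using coprime_a_b a_le_b a_pos by (simp add: rat_divide_code Let_def)
  moreover have "0 < (of_int (int a) / of_int b :: rat)" "(of_int (int a) / of_int b :: rat) \<le> 1"
    using a_le_b a_pos by simp_all
  ultimately show ?thesis using CS_eq_ceil_gaps t_def by simp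
qed

lemma D_period: "D (i + 2 * a) = D i"
  using D_add_mult[of i 2] by (simp add: mult.commute)

lemma take_rotate_gaps:
  "j < 2 * a \<Longrightarrow> l \<le> 2 * a \<Longrightarrow> take l (rotate j (map D [1..<2 * a + 1])) = map D [1 + j..<1 + j + l]"
  by (rule take_rotate_map_upt_period[of D "2 * a", OF D_period])

lemma map_D_mod_eq: "x mod a = y mod a \<Longrightarrow> map D [x..<x + l] = map D [y..<y + l]"
  by (rule nth_equalityI) (auto intro: D_mod_eq simp: mod_add_left_eq[of x a, symmetric]
      mod_add_left_eq[of y a, symmetric])

lemma map_D_append:
  "w mod a = (y + l) mod a \<Longrightarrow> map D [y..<y + l] @ map D [w..<w + l'] = map D [y..<y + l + l']"
  using map_D_mod_eq[of w "y + l" l'] upt_add_eq_append[of y "y + l" l'] by simp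

lemma concat_replicate_map_D: "concat (replicate N (map D [y..<y + a])) = map D [y..<y + N * a]"
proof (induction N)
  case (Suc N)
  have "concat (replicate (Suc N) (map D [y..<y + a])) = map D [y..<y + N * a] @ map D [y..<y + a]"
    using Suc by (simp add: replicate_append_same[symmetric])
  also have "\<dots> = map D [y..<y + N * a + a]" by (rule map_D_append) simp
  finally show ?case by (simp add: add.commute add.left_commute)
qed simp

text \<open>The three occurrences: the two positions congruent to the start of the window modulo \<open>a\<close>,
  and the first of them shifted by \<open>d\<close>.\<close>

lemma cyc_occ_shift_invariant_window:
  assumes l: "l \<le> 2 * a" and d: "0 < d" "d < a" and inv: "\<And>i. i < l \<Longrightarrow> D (x + i + d) = D (x + i)"
  shows "3 \<le> cyc_occ (map D [1..<2 * a + 1]) (map D [x..<x + l])"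
proof -
  define W where "W = map D [x..<x + l]"
  define Occ where "Occ = {j. j < 2 * a \<and> l \<le> 2 * a \<and> take l (rotate j (map D [1..<2 * a + 1])) = W}"
  have Occ: "cyc_occ (map D [1..<2 * a + 1]) W = card Occ" unfolding cyc_occ_def Occ_def W_def by simp
  have occ_at: "j \<in> Occ" if "j < 2 * a" "(1 + j) mod a = (x + k) mod a" "map D [x + k..<x + k + l] = W" for j k
    using take_rotate_gaps[OF that(1) l] map_D_mod_eq[OF that(2), of l] that l unfolding Occ_def by (simp del: upt_Suc)
  define j0 where "j0 = (x + a - 1) mod a"
  have j0: "j0 < a" "(1 + j0) mod a = x mod a"
  proof -
    show "j0 < a" unfolding j0_def using a_ge_2 by simp
    have "(1 + j0) mod a = (1 + (x + a - 1)) mod a" unfolding j0_def by (simp only: mod_add_right_eq)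
    also have "1 + (x + a - 1) = x + a" using a_ge_2 by simp
    finally show "(1 + j0) mod a = x mod a" by simp
  qed
  have "(1 + (j0 + a)) mod a = x mod a" "(1 + (j0 + d)) mod a = (x + d) mod a"
    using j0(2) mod_add_self2[of "1 + j0" a] mod_add_cong[OF j0(2), of d d] by (simp_all only: add.assoc)
  moreover have "map D [x + d..<x + d + l] = W"
    unfolding W_def using inv by (intro nth_equalityI) (simp_all add: ac_simps)
  ultimately have "{j0, j0 + a, j0 + d} \<subseteq> Occ"
    using occ_at[of j0 0] occ_at[of "j0 + a" 0] occ_at[of "j0 + d" d] j0 d unfolding W_def by simp
  moreover have "card {j0, j0 + a, j0 + d} = 3" using d by simp
  moreover have "finite Occ" unfolding Occ_def by simp
  ultimately show ?thesis unfolding W_def[symmetric] Occ by (metis card_mono)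
qed

lemma twice_occurring_window_hits_0:
  assumes "cyc_occ (map D [1..<2 * a + 1]) (map D [x..<x + l]) = 2" "l \<le> 2 * a"
  shows "\<exists>d\<le>l. (x + d) mod a = 0"
proof (rule ccontr)
  assume "\<not> ?thesis"
  then have "D (x + i + e) = D (x + i)" if "i < l" for i
    using that D_add_e[of "x + i"] by (metis Suc_leI add_Suc_right less_imp_le)
  then have "3 \<le> cyc_occ (map D [1..<2 * a + 1]) (map D [x..<x + l])"
    using cyc_occ_shift_invariant_window[OF assms(2) e_pos e_less] by blast
  then show False using assms(1) by simp
qed

lemma twice_occurring_window_hits_e:
  assumes "cyc_occ (map D [1..<2 * a + 1]) (map D [x..<x + l]) = 2" "l \<le> 2 * a"
  shows "\<exists>d\<le>l. (x + d) mod a = e"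
proof (rule ccontr)
  assume "\<not> ?thesis"
  then have "D (x + i + (a - e)) = D (x + i)" if "i < l" for i
    using that D_add_a_minus_e[of "x + i"] by (metis Suc_leI add_Suc_right less_imp_le)
  then have "3 \<le> cyc_occ (map D [1..<2 * a + 1]) (map D [x..<x + l])"
    using cyc_occ_shift_invariant_window[OF assms(2), of "a - e"] e_pos e_less by simp
  then show False using assms(1) by simp
qed

lemma rotation_window:
  assumes "rotate j (map D [1..<2 * a + 1]) = S1 @ S2 @ S1 @ S2"
  obtains x where "S1 @ S2 = map D [x..<x + a]"
proof -
  define L where "L = map D [1..<2 * a + 1]"
  define j' where "j' = j mod (2 * a)"
  have j': "j' < 2 * a" unfolding j'_def using a_ge_2 by simp
  have "length L = 2 * a" unfolding L_def by simp
  then have "S1 @ S2 @ S1 @ S2 = take (2 * a) (rotate j' L)"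
    using assms rotate_conv_mod[of j L] unfolding L_def j'_def by simp
  also have "\<dots> = map D [1 + j'..<1 + j' + 2 * a]" unfolding L_def by (rule take_rotate_gaps[OF j']) simp
  finally have rot: "S1 @ S2 @ S1 @ S2 = map D [1 + j'..<1 + j' + 2 * a]" .
  have "length (S1 @ S2) = a" using arg_cong[OF rot, of length] by (simp del: upt_Suc)
  then have "S1 @ S2 = take a (S1 @ S2 @ S1 @ S2)" by simp
  also have "\<dots> = map D [1 + j'..<1 + j' + a]" unfolding rot by (simp add: take_map del: upt_Suc)
  finally show thesis by (rule that)
qed

lemma CS_decomp_position:
  assumes "is_CS_decomp m (map D [1..<2 * a + 1]) S1 S2"
  obtains x where "x mod a = 0" "S1 = map D [x..<x + e]" "S2 = map D [x + e..<x + a]"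
proof -
  obtain j where rot: "rotate j (map D [1..<2 * a + 1]) = S1 @ S2 @ S1 @ S2"
    and ne: "S1 \<noteq> []" "S2 \<noteq> []"
    and occ: "cyc_occ (map D [1..<2 * a + 1]) S1 = 2" "cyc_occ (map D [1..<2 * a + 1]) S2 = 2"
    and hd: "hd S1 = m + 1" "hd S2 = m"
    using assms unfolding is_CS_decomp_def by blast
  obtain x where S12: "S1 @ S2 = map D [x..<x + a]" using rotation_window[OF rot] .
  define l where "l = length S1"
  have "length S1 + length S2 = a" using arg_cong[OF S12, of length] by simp
  moreover have "0 < length S1" "0 < length S2" using ne by simp_all
  ultimately have l: "0 < l" "l < a" unfolding l_def by linarith+
  have S1: "S1 = map D [x..<x + l]"
    using arg_cong[OF S12, of "take l"] l unfolding l_def by (simp add: take_map del: upt_Suc)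
  have S2: "S2 = map D [x + l..<x + l + (a - l)]"
    using arg_cong[OF S12, of "drop l"] l unfolding l_def by (simp add: drop_map del: upt_Suc)
  have "x mod a = 0 \<or> (x + l) mod a = 0" "x mod a = e \<or> (x + l) mod a = e"
    using residue_at_window_boundary[of l a x] l
      twice_occurring_window_hits_0[of x l] twice_occurring_window_hits_0[of "x + l" "a - l"]
      twice_occurring_window_hits_e[of x l] twice_occurring_window_hits_e[of "x + l" "a - l"]
      occ S1 S2 by simp_all
  moreover have "D x = m + 1" "D (x + l) = m"
    using hd l unfolding S1 S2 by (simp_all add: upt_rec)
  ultimately have x: "x mod a = 0" and xl: "(x + l) mod a = e"
    using D_at_0[of "x + l"] D_at_e[of x] by auto
  then have "l = e" using l by (simp add: mod_add_left_eq[of x a l, symmetric])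
  then show thesis using that x S1 S2 l by simp
qed

lemma decomp_pattern_from_0:
  assumes "is_CS_decomp m (map D [1..<2 * a + 1]) S1 S2"
  shows "drep N S1 S2 @ S1 = map D [0..<0 + (N * a + e)]"
proof -
  obtain x where x: "x mod a = 0" and S: "S1 = map D [x..<x + e]" "S2 = map D [x + e..<x + a]"
    using CS_decomp_position[OF assms] .
  have "S1 @ S2 = map D [x..<x + a]" unfolding S using upt_add_eq_append[of x "x + e" "a - e"] e_less
    by simp
  then have "drep N S1 S2 @ S1 = map D [x..<x + N * a] @ map D [x..<x + e]"
    unfolding drep_def using S(1) by (simp add: concat_replicate_map_D)
  also have "\<dots> = map D [x..<x + N * a + e]" by (rule map_D_append) simp
  also have "\<dots> = map D [0..<0 + (N * a + e)]" using map_D_mod_eq[of x 0] x by (simp add: add.assoc)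
  finally show ?thesis .
qed

lemma decomp_pattern_from_e:
  assumes "is_CS_decomp m (map D [1..<2 * a + 1]) S1 S2"
  shows "drep N S2 S1 @ S2 = map D [e..<e + (N * a + (a - e))]"
proof -
  obtain x where x: "x mod a = 0" and S: "S1 = map D [x..<x + e]" "S2 = map D [x + e..<x + e + (a - e)]"
    using CS_decomp_position[OF assms] e_less by auto
  have "S2 @ S1 = map D [x + e..<x + e + (a - e) + e]" unfolding S by (rule map_D_append) (use e_less in simp)
  also have "x + e + (a - e) + e = x + e + a" using e_less by simp
  finally have "drep N S2 S1 @ S2 = map D [x + e..<x + e + N * a] @ map D [x + e..<x + e + (a - e)]"
    unfolding drep_def using S(2) by (simp add: concat_replicate_map_D)
  also have "\<dots> = map D [x + e..<x + e + N * a + (a - e)]" by (rule map_D_append) simp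
  also have "\<dots> = map D [e..<e + (N * a + (a - e))]"
    using map_D_mod_eq[of "x + e" e] x by (simp add: add.assoc mod_add_left_eq[of x a e, symmetric])
  finally show ?thesis .
qed

lemma pattern_from_0_slope:
  assumes s: "0 < s" "s \<le> 1" and N: "2 \<le> N"
    and cc: "cyc_contains (CS s) (map D [0..<0 + (N * a + e)])"
  shows "of_int (2 * int a - int e) / of_int (2 * b - f) < s"
    and "s < of_int (int e + int N * int a) / of_int (f + int N * b)"
proof -
  note slope = CS_window_slope[OF s cc int_D]
  have "2 * a \<le> N * a" using N by (rule mult_le_mono1)
  then have "2 * a \<le> N * a + e" by linarith
  then have "of_nat (2 * a - e) < of_int (C (0 + 2 * a) - C (0 + e) + 1) * s"
    using slope(2)[of e "2 * a"] e_less by simp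
  moreover have "C (0 + 2 * a) = 2 * b" using C_add_mult[of 0 2] by simp
  ultimately have "of_int (2 * int a - int e) < of_int (2 * b - f) * s"
    using C_e e_less by (simp add: of_nat_diff)
  then show "of_int (2 * int a - int e) / of_int (2 * b - f) < s"
    by (intro pos_divide_less_eq[THEN iffD2] of_int_pos) (use f_bounds in \<open>simp_all add: mult.commute\<close>)
  have "of_int (C (0 + (N * a + e)) - C (0 + 0) - 1) * s < of_nat (N * a + e - 0)"
    using slope(1)[of 0 "N * a + e"] by simp
  moreover have "C (0 + (N * a + e)) = f + 1 + int N * b" using C_add_mult[of e N] C_e by (simp add: add.commute)
  ultimately have "of_int (f + int N * b) * s < of_int (int e + int N * int a)" by simp
  moreover have "0 < f + int N * b" using f_bounds N by (simp add: add_nonneg_pos)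
  ultimately show "s < of_int (int e + int N * int a) / of_int (f + int N * b)"
    by (intro pos_less_divide_eq[THEN iffD2] of_int_pos) (simp_all add: mult.commute)
qed

lemma pattern_from_e_slope:
  assumes s: "0 < s" "s \<le> 1" and N: "2 \<le> N"
    and cc: "cyc_contains (CS s) (map D [e..<e + (N * a + (a - e))])"
  shows "of_int (int N * int a + (int a - int e)) / of_int (int N * b + (b - f)) < s"
    and "s < of_int (int a + int e) / of_int (b + f)"
proof -
  note slope = CS_window_slope[OF s cc int_D]
  have "e + (N * a + (a - e)) = 0 + Suc N * a" using e_less by simp
  then have "C (e + (N * a + (a - e))) = int (Suc N) * b" using C_add_mult[of 0 "Suc N"] by (simp only:) simp
  moreover have "of_nat (N * a + (a - e) - 0) < of_int (C (e + (N * a + (a - e))) - C (e + 0) + 1) * s"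
    using slope(2)[of 0 "N * a + (a - e)"] by simp
  ultimately have "of_int (int N * int a + (int a - int e)) < of_int (int N * b + (b - f)) * s"
    using C_e e_less by (simp add: of_nat_diff algebra_simps)
  moreover have "0 < int N * b + (b - f)" using f_bounds N by (simp add: add_nonneg_pos)
  ultimately show "of_int (int N * int a + (int a - int e)) / of_int (int N * b + (b - f)) < s"
    by (intro pos_divide_less_eq[THEN iffD2] of_int_pos) (simp_all add: mult.commute)
  have "2 * a \<le> N * a" using N by (rule mult_le_mono1)
  then have "a - e \<le> 2 * a" "2 * a \<le> N * a + (a - e)" by linarith+
  then have "of_int (C (e + 2 * a) - C (e + (a - e)) - 1) * s < of_nat (2 * a - (a - e))"
    using slope(1)[of "a - e" "2 * a"] by blast
  moreover have "C (e + 2 * a) = f + 1 + 2 * b" using C_add_mult[of e 2] C_e by simp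
  moreover have "C (e + (a - e)) = b" using C_add_mult[of 0 1] e_less by simp
  ultimately have "of_int (b + f) * s < of_int (int a + int e)" using e_less by (simp add: of_nat_diff add.commute)
  moreover have "0 < b + f" using f_bounds by simp
  ultimately show "s < of_int (int a + int e) / of_int (b + f)"
    by (intro pos_less_divide_eq[THEN iffD2] of_int_pos) (simp_all add: mult.commute)
qed

lemma CS_excludes_pattern_from_0:
  assumes "is_CS_decomp m (CS (of_int (int a) / of_int b)) S1 S2" and s: "0 \<le> s" "s \<le> 1" and N: "2 \<le> N"
    and "s \<le> of_int (2 * int a - int e) / of_int (2 * b - f)
         \<or> of_int (int e + int N * int a) / of_int (f + int N * b) \<le> s"
  shows "\<not> cyc_contains (CS s) (drep N S1 S2 @ S1)"
proof
  assume "cyc_contains (CS s) (drep N S1 S2 @ S1)"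
  then have cc: "cyc_contains (CS s) (map D [0..<0 + (N * a + e)])"
    using decomp_pattern_from_0 assms(1) unfolding CS_slope by simp
  have "2 * 1 \<le> N * a" using N a_ge_2 by (intro mult_le_mono) simp_all
  then have "0 < s" using cyc_contains_CS_pos[OF s(1) cc] by simp
  then show False using pattern_from_0_slope[OF _ s(2) N cc] assms(5) by (meson not_le)
qed

lemma CS_excludes_pattern_from_e:
  assumes "is_CS_decomp m (CS (of_int (int a) / of_int b)) S1 S2" and s: "0 \<le> s" "s \<le> 1" and N: "2 \<le> N"
    and "s \<le> of_int (int N * int a + (int a - int e)) / of_int (int N * b + (b - f))
         \<or> of_int (int a + int e) / of_int (b + f) \<le> s"
  shows "\<not> cyc_contains (CS s) (drep N S2 S1 @ S2)"
proof
  assume "cyc_contains (CS s) (drep N S2 S1 @ S2)"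
  then have cc: "cyc_contains (CS s) (map D [e..<e + (N * a + (a - e))])"
    using decomp_pattern_from_e assms(1) unfolding CS_slope by simp
  have "2 * 1 \<le> N * a" using N a_ge_2 by (intro mult_le_mono) simp_all
  then have "0 < s" using cyc_contains_CS_pos[OF s(1) cc] by simp
  then show False using pattern_from_e_slope[OF _ s(2) N cc] assms(5) by (meson not_le)
qed

end

theorem lemma2p1:
  fixes r :: rat and ms :: "nat list" and n :: nat and S1 S2 :: "nat list"
  assumes "0 < r" "r < 1"
    and "\<forall>p::nat. p \<ge> 2 \<longrightarrow> r \<noteq> 1 / of_nat p"
    and "length ms \<ge> 2" "\<forall>x\<in>set ms. x > 0" "last ms \<ge> 2"
    and "r = cf ms"
    and "n \<ge> 2"
    and "is_CS_decomp (hd ms) (CS r) S1 S2"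
  shows "\<forall>s \<in> I1 ms n \<union> I2 ms n.
           (even (length ms) \<longrightarrow> \<not> cyc_contains (CS s) (drep (2 * n - 2) S1 S2 @ S1)) \<and>
           (odd (length ms) \<longrightarrow> \<not> cyc_contains (CS s) (drep (2 * n - 2) S2 S1 @ S2))"
proof (intro ballI conjI impI)
  obtain A1 A2 B1 B2 where r: "cf ms = of_int A2 / of_int B2"
    and det: "A1 * B2 - A2 * B1 = (-1) ^ length ms" and A: "1 \<le> A1" "A1 < A2"
    and m: "B2 div A2 = int (hd ms)"
    and left: "cf (butlast ms @ [last ms - 1, 2]) = of_int (2 * A2 - A1) / of_int (2 * B2 - B1)"
    and right: "\<And>N. 0 < N \<Longrightarrow> cf (ms @ [N]) = of_int (A1 + int N * A2) / of_int (B1 + int N * B2)"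
    using last_convergents[OF assms(4-6)] by blast
  have "0 < hd ms" using assms(4,5) hd_in_set[of ms] by fastforce
  have decomp: "is_CS_decomp (hd ms) (CS (of_int (int (nat A2)) / of_int B2)) S1 S2"
    using assms(7,9) r A by simp
  fix s assume s: "s \<in> I1 ms n \<union> I2 ms n"
  note s01 = I1_I2_unit_interval[OF assms(5,6,8) s]
  have N: "2 \<le> 2 * n - 2" using assms(8) by simp
  \<comment> \<open>\<open>A1/B1 = [m_1, \<dots>, m_(k-1)]\<close>; the neighbour \<open>e/f\<close> is \<open>A1/B1\<close> for even \<open>k\<close> and
    \<open>(A2 - A1)/(B2 - B1)\<close> for odd \<open>k\<close>.\<close>
  {
    assume ev: "even (length ms)"
    interpret unimodular_slope "nat A2" B2 "hd ms" "nat A1" B1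
      using A det ev m \<open>0 < hd ms\<close> by unfold_locales (simp_all add: algebra_simps)
    show "\<not> cyc_contains (CS s) (drep (2 * n - 2) S1 S2 @ S1)"
      by (rule CS_excludes_pattern_from_0[OF decomp s01 N])
         (use s ev A left right[of "2 * n - 2"] N in \<open>auto simp: I1_def I2_def\<close>)
  next
    assume od: "odd (length ms)"
    interpret unimodular_slope "nat A2" B2 "hd ms" "nat (A2 - A1)" "B2 - B1"
      using A det od m \<open>0 < hd ms\<close> by unfold_locales (simp_all add: algebra_simps)
    show "\<not> cyc_contains (CS s) (drep (2 * n - 2) S2 S1 @ S2)"
      by (rule CS_excludes_pattern_from_e[OF decomp s01 N])
         (use s od A left right[of "2 * n - 2"] N in \<open>auto simp: I1_def I2_def algebra_simps\<close>)
  }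
qed

end
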